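(* The attraction basin $\mathcal A$ of $x_0$ is invariant under the auxiliary flow: if $x\in\mathcal A$ and $(x,t)\in D_\Phi$ then $\Phi(x,t)\in\mathcal A$. The boundary $\partial\mathcal A$ of $\mathcal A$ relative to $D$ is also invariant in the same sense. Moreover, for every $x\in\partial\mathcal A$ the trajectory through $x$ is not global in the future.
   Context: Standing setting: $X,Y$ are real Banach spaces, $D\subseteq X$ is a nonempty open connected set, $f:D\to Y$ is a local homeomorphism (every point has an open neighbourhood mapped homeomorphically onto an open set), $x_0\in D$, $y_0=f(x_0)$. A flow in $D$ is a map $\Phi:D_\Phi\to D$ such that: (i) $D_\Phi$ is an open subset of $D\times\mathbb R$ and $\Phi$ is continuous; (ii) for each $x\in D$, $\{t:(x,t)\in D_\Phi\}$ is an interval containing $0$; (iii) $\Phi(x,0)=x$; (iv) if $(x,t_1),(x,t_1+t_2)\in D_\Phi$ then $(\Phi(x,t_1),t_2)\in D_\Phi$ and $\Phi(\Phi(x,t_1),t_2)=\Phi(x,t_1+t_2)$. The trajectory through $x$ is global in the future if $\{x\}\times[0,+\infty)\subseteq D_\Phi$. Let $\Psi(y,t)=y_0+e^{-t}(y-y_0)$ for $y\in Y,t\in\mathbb R$. The auxiliary flow $\Phi$ is the unique flow in $D$ of maximal domain with $f(\Phi(x,t))=\Psi(f(x),t)$ for all $(x,t)\in D_\Phi$; for each $x$, $t\mapsto\Phi(x,t)$ is the maximal continuous lifting by $f$ of $t\mapsto\Psi(f(x),t)$ through $x$ at $t=0$. The attraction basin $\mathcal A$ of $x_0$ is the set of $x\in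 D$ whose trajectory is global in the future and satisfies $\Phi(x,t)\to x_0$ as $t\to+\infty$. *)

theory Defs
  imports "HOL-Analysis.Analysis"
begin

definition local_homeo_on :: "'a::topological_space set \<Rightarrow> ('a \<Rightarrow> 'b::topological_space) \<Rightarrow> bool" where
  "local_homeo_on D f \<longleftrightarrow>
     (\<forall>x\<in>D. \<exists>U g. open U \<and> x \<in> U \<and> U \<subseteq> D \<and> open (f ` U) \<and> homeomorphism U (f ` U) f g)"

definition is_flow :: "'a::topological_space set \<Rightarrow> ('a \<times> real) set \<Rightarrow> ('a \<Rightarrow> real \<Rightarrow> 'a) \<Rightarrow> bool" where
  "is_flow D DPhi Phi \<longleftrightarrow>
     open DPhi \<and> DPhi \<subseteq> D \<times> UNIV \<and>
     continuous_on DPhi (\<lambda>(x, t). Phi x t) \<and>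
     (\<forall>p\<in>DPhi. Phi (fst p) (snd p) \<in> D) \<and>
     (\<forall>x\<in>D. is_interval {t. (x, t) \<in> DPhi} \<and> (x, 0) \<in> DPhi) \<and>
     (\<forall>x\<in>D. Phi x 0 = x) \<and>
     (\<forall>x t1 t2. (x, t1) \<in> DPhi \<longrightarrow> (x, t1 + t2) \<in> DPhi \<longrightarrow>
        (Phi x t1, t2) \<in> DPhi \<and> Phi (Phi x t1) t2 = Phi x (t1 + t2))"

definition Psi :: "'b::real_normed_vector \<Rightarrow> 'b \<Rightarrow> real \<Rightarrow> 'b" where
  "Psi y0 y t = y0 + exp (- t) *\<^sub>R (y - y0)"

definition lifts_Psi :: "('a \<Rightarrow> 'b::real_normed_vector) \<Rightarrow> 'b \<Rightarrow> ('a \<times> real) set \<Rightarrow> ('a \<Rightarrow> real \<Rightarrow> 'a) \<Rightarrow> bool" where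
  "lifts_Psi f y0 DPhi Phi \<longleftrightarrow> (\<forall>(x, t)\<in>DPhi. f (Phi x t) = Psi y0 (f x) t)"

definition auxiliary_flow ::
  "'a::topological_space set \<Rightarrow> ('a \<Rightarrow> 'b::real_normed_vector) \<Rightarrow> 'a \<Rightarrow> ('a \<times> real) set \<Rightarrow> ('a \<Rightarrow> real \<Rightarrow> 'a) \<Rightarrow> bool" where
  "auxiliary_flow D f x0 DPhi Phi \<longleftrightarrow>
     is_flow D DPhi Phi \<and> lifts_Psi f (f x0) DPhi Phi \<and>
     (\<forall>DPhi' Phi'. is_flow D DPhi' Phi' \<and> lifts_Psi f (f x0) DPhi' Phi' \<longrightarrow> DPhi' \<subseteq> DPhi)"

definition global_future :: "('a \<times> real) set \<Rightarrow> 'a \<Rightarrow> bool" where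
  "global_future DPhi x \<longleftrightarrow> (\<forall>t\<ge>0. (x, t) \<in> DPhi)"

definition attraction_basin ::
  "'a::topological_space set \<Rightarrow> ('a \<times> real) set \<Rightarrow> ('a \<Rightarrow> real \<Rightarrow> 'a) \<Rightarrow> 'a \<Rightarrow> 'a set" where
  "attraction_basin D DPhi Phi x0 =
     {x \<in> D. global_future DPhi x \<and> ((\<lambda>t. Phi x t) \<longlongrightarrow> x0) at_top}"

end

theory Submission
  imports Defs
begin

text \<open>Trajectories of the auxiliary flow are lifts through \<open>f\<close> of the contraction
  \<open>\<Psi>(y, t) = y\<^sub>0 + e\<^sup>-\<^sup>t (y - y\<^sub>0)\<close>, and lifts through a local homeomorphism are unique. Hence
  a flow lifting \<open>\<Psi>\<close> already contains every continuous lift of \<open>\<Psi>\<close>: the trajectory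
  through the endpoint of a lift can be glued to the trajectory through its start. Near \<open>x\<^sub>0\<close>
  such lifts are given by a chart inverse \<open>g\<close> of \<open>f\<close>, so a neighbourhood of \<open>x\<^sub>0\<close> lies in
  the basin \<open>\<A>\<close>; since trajectories can be run backwards, \<open>\<A>\<close> is open and \<open>\<A>\<close> and its
  boundary are invariant. On the closure of \<open>\<A>\<close>, \<open>g \<circ> f\<close> is the identity over the chart ball
  around \<open>y\<^sub>0\<close>. A global trajectory from a boundary point stays in the boundary while its image
  enters that ball, so it would reach the neighbourhood of \<open>x\<^sub>0\<close> inside \<open>\<A>\<close>.\<close>

lemma local_homeo_onE:
  assumes "local_homeo_on D f" "x \<in> D"
  obtains U g where "open U" "x \<in> U" "U \<subseteq> D" "open (f ` U)" "homeomorphism U (f ` U) f g"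
  using assms unfolding local_homeo_on_def by meson

lemma local_homeo_on_open: "local_homeo_on D f \<Longrightarrow> open D"
  unfolding local_homeo_on_def open_subopen[of D] by blast

lemma local_homeo_on_continuous:
  fixes f :: "'a::t2_space \<Rightarrow> 'b::topological_space"
  assumes "local_homeo_on D f" shows "continuous_on D f"
proof -
  have "isCont f x" if xD: "x \<in> D" for x
  proof -
    obtain U h where "open U" "x \<in> U" "U \<subseteq> D" "open (f ` U)" "homeomorphism U (f ` U) f h"
      by (rule local_homeo_onE[OF assms xD])
    with homeomorphism_cont1 show ?thesis by (metis continuous_on_eq_continuous_at)
  qed
  then show ?thesis by (simp add: continuous_at_imp_continuous_on)
qed

lemma local_homeo_lift_unique:
  fixes f :: "'a::metric_space \<Rightarrow> 'b::topological_space" and I :: "'c::topological_space set"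
  assumes "local_homeo_on D f" "connected I"
    and "continuous_on I \<gamma>\<^sub>1" "continuous_on I \<gamma>\<^sub>2" "\<gamma>\<^sub>1 ` I \<subseteq> D" "\<gamma>\<^sub>2 ` I \<subseteq> D"
    and "\<And>t. t \<in> I \<Longrightarrow> f (\<gamma>\<^sub>1 t) = f (\<gamma>\<^sub>2 t)"
    and "a \<in> I" "\<gamma>\<^sub>1 a = \<gamma>\<^sub>2 a" "t \<in> I"
  shows "\<gamma>\<^sub>1 t = \<gamma>\<^sub>2 t"
proof -
  let ?S = "{t \<in> I. \<gamma>\<^sub>1 t = \<gamma>\<^sub>2 t}"
  have "closedin (top_of_set I) ?S"
    using closedin_continuous_maps_eq[OF Hausdorff_space_euclidean, of "top_of_set I" \<gamma>\<^sub>1 \<gamma>\<^sub>2] assms(3,4)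
    unfolding continuous_map_iff_continuous by simp
  moreover have "openin (top_of_set I) ?S"
    unfolding openin_subopen[of _ ?S]
  proof
    fix s assume s: "s \<in> ?S"
    then have "\<gamma>\<^sub>1 s \<in> D" using assms(5) by blast
    then obtain U h where U: "open U" "\<gamma>\<^sub>1 s \<in> U" "U \<subseteq> D" "open (f ` U)" "homeomorphism U (f ` U) f h"
      by (rule local_homeo_onE[OF assms(1)])
    have "inj_on f U" using homeomorphism_apply1[OF U(5)] by (rule inj_on_inverseI)
    let ?T = "(I \<inter> \<gamma>\<^sub>1 -` U) \<inter> (I \<inter> \<gamma>\<^sub>2 -` U)"
    have "openin (top_of_set I) ?T"
      by (intro openin_Int continuous_openin_preimage_gen assms(3,4) U(1))
    moreover have "?T \<subseteq> ?S" using \<open>inj_on f U\<close> assms(7) by (auto dest: inj_onD)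
    ultimately show "\<exists>T. openin (top_of_set I) T \<and> s \<in> T \<and> T \<subseteq> ?S" using s U(2) by auto
  qed
  ultimately have "?S = I" using assms(2,8,9) unfolding connected_clopen by blast
  then show ?thesis using assms(10) by blast
qed

lemma Psi_0 [simp]: "Psi y0 y 0 = y"
  by (simp add: Psi_def)

lemma Psi_add: "Psi y0 (Psi y0 y a) b = Psi y0 y (a + b)"
  by (simp add: Psi_def scaleR_scaleR exp_add[symmetric] add.commute)

lemma tendsto_Psi: "((\<lambda>s. Psi y0 y s) \<longlongrightarrow> y0) at_top"
proof -
  have "((\<lambda>s::real. exp (- s)) \<longlongrightarrow> 0) at_top"
    using filterlim_compose[OF exp_at_bot filterlim_uminus_at_bot_at_top] by simp
  then have "((\<lambda>s. y0 + exp (- s) *\<^sub>R (y - y0)) \<longlongrightarrow> y0 + 0 *\<^sub>R (y - y0)) at_top"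
    by (intro tendsto_intros)
  then show ?thesis by (simp add: Psi_def)
qed

lemma dist_Psi_le: "0 \<le> s \<Longrightarrow> dist (Psi y0 y s) y0 \<le> dist y y0"
  by (simp add: Psi_def dist_norm mult_left_le_one_le)

lemma continuous_on_Psi: "continuous_on S (\<lambda>s. Psi y0 y s)"
  unfolding Psi_def by (intro continuous_intros)

locale flow =
  fixes D :: "'a::topological_space set" and DPhi :: "('a \<times> real) set" and Phi :: "'a \<Rightarrow> real \<Rightarrow> 'a"
  assumes is_flow: "is_flow D DPhi Phi"
begin

lemma open_flow_domain: "open DPhi"
  using is_flow by (simp add: is_flow_def)

lemma flow_domain_in_D: "(x, t) \<in> DPhi \<Longrightarrow> x \<in> D"
  using is_flow by (auto simp: is_flow_def)

lemma Phi_in_D: "(x, t) \<in> DPhi \<Longrightarrow> Phi x t \<in> D"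
  using is_flow by (force simp: is_flow_def)

lemma zero_in_flow_domain: "x \<in> D \<Longrightarrow> (x, 0) \<in> DPhi"
  using is_flow by (simp add: is_flow_def)

lemma Phi_0: "x \<in> D \<Longrightarrow> Phi x 0 = x"
  using is_flow by (simp add: is_flow_def)

lemma flow_domain_interval:
  assumes "(x, a) \<in> DPhi" "(x, b) \<in> DPhi" "a \<le> c" "c \<le> b"
  shows "(x, c) \<in> DPhi"
proof -
  have "is_interval {t. (x, t) \<in> DPhi}"
    using is_flow flow_domain_in_D[OF assms(1)] by (simp add: is_flow_def)
  with assms show ?thesis unfolding is_interval_1 by blast
qed

lemma Phi_add:
  "(x, t1) \<in> DPhi \<Longrightarrow> (x, t1 + t2) \<in> DPhi \<Longrightarrow> (Phi x t1, t2) \<in> DPhi \<and> Phi (Phi x t1) t2 = Phi x (t1 + t2)"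
  using is_flow unfolding is_flow_def by blast

lemma Phi_reverse:
  assumes "(x, t) \<in> DPhi"
  shows "(Phi x t, - t) \<in> DPhi" "Phi (Phi x t) (- t) = x"
  using Phi_add[OF assms, of "- t"] zero_in_flow_domain Phi_0 flow_domain_in_D[OF assms] by auto

lemma flow_domain_add:
  assumes "(x, t1) \<in> DPhi" "(Phi x t1, t2) \<in> DPhi"
  shows "(x, t1 + t2) \<in> DPhi"
  using Phi_add[OF Phi_reverse(1)[OF assms(1)], of "t1 + t2"] assms Phi_reverse(2)[OF assms(1)] by simp

lemma open_time_slice: "open {t. (x, t) \<in> DPhi}"
  using open_vimage[OF open_flow_domain, of "Pair x"] by (simp add: vimage_def continuous_on_Pair)

lemma continuous_on_flow: "continuous_on DPhi (\<lambda>(x, t). Phi x t)"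
  using is_flow by (simp add: is_flow_def)

lemma continuous_on_flow_map:
  assumes "\<And>z. z \<in> S \<Longrightarrow> (z, t) \<in> DPhi"
  shows "continuous_on S (\<lambda>z. Phi z t)"
  using continuous_on_compose2[OF continuous_on_flow continuous_on_Pair[OF continuous_on_id continuous_on_const]] assms
  by auto

lemma open_flow_preimage:
  assumes "open V" shows "open {z. (z, t) \<in> DPhi \<and> Phi z t \<in> V}"
proof -
  have slice: "open {z. (z, t) \<in> DPhi}"
    using open_vimage[OF open_flow_domain, of "\<lambda>z. (z, t)"] by (simp add: vimage_def continuous_on_Pair)
  have eq: "{z. (z, t) \<in> DPhi \<and> Phi z t \<in> V} = {z. (z, t) \<in> DPhi} \<inter> (\<lambda>z. Phi z t) -` V"
    by auto
  show ?thesis unfolding eq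
    by (rule continuous_open_preimage[OF continuous_on_flow_map slice assms]) simp
qed

lemma continuous_on_trajectory:
  assumes "\<And>t. t \<in> S \<Longrightarrow> (x, t) \<in> DPhi"
  shows "continuous_on S (\<lambda>t. Phi x t)"
  using continuous_on_compose2[OF continuous_on_flow continuous_on_Pair[OF continuous_on_const continuous_on_id]] assms
  by auto

end

locale lifted_flow = flow D DPhi Phi
  for D :: "'a::metric_space set" and DPhi and Phi +
  fixes f :: "'a \<Rightarrow> 'b::real_normed_vector" and x0 :: 'a
  assumes local_homeo: "local_homeo_on D f"
    and lifts: "lifts_Psi f (f x0) DPhi Phi"
    and x0_in_D: "x0 \<in> D"
begin

abbreviation basin where "basin \<equiv> attraction_basin D DPhi Phi x0"

lemma f_Phi: "(x, t) \<in> DPhi \<Longrightarrow> f (Phi x t) = Psi (f x0) (f x) t"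
  using lifts unfolding lifts_Psi_def by auto

lemma trajectory_eq_lift:
  assumes "connected I" and dom: "\<And>t. t \<in> I \<Longrightarrow> (x, t) \<in> DPhi"
    and "continuous_on I \<gamma>" "\<gamma> ` I \<subseteq> D" "\<And>t. t \<in> I \<Longrightarrow> f (\<gamma> t) = Psi (f x0) (f x) t"
    and "a \<in> I" "Phi x a = \<gamma> a" "t \<in> I"
  shows "Phi x t = \<gamma> t"
proof -
  have img: "(\<lambda>t. Phi x t) ` I \<subseteq> D" using dom Phi_in_D by auto
  have "\<And>t. t \<in> I \<Longrightarrow> f (Phi x t) = f (\<gamma> t)" using dom f_Phi assms(5) by simp
  from local_homeo_lift_unique[OF local_homeo assms(1) continuous_on_trajectory[OF dom] assms(3)
      img assms(4) this assms(6,7,8)]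
  show ?thesis .
qed

text \<open>The trajectory through \<open>p = \<gamma> m\<close> runs backwards along \<open>\<gamma>\<close> into the part of \<open>\<gamma>\<close> already
  covered by the trajectory through \<open>x\<close>, and also a little forwards; gluing the two extends the
  trajectory through \<open>x\<close> beyond \<open>m\<close>.\<close>
lemma flow_domain_contains_lift_endpoint:
  assumes "0 < m" and \<gamma>: "continuous_on {0..m} \<gamma>" "\<gamma> ` {0..m} \<subseteq> D" "\<gamma> 0 = x"
    and lift: "\<And>\<sigma>. \<sigma> \<in> {0..m} \<Longrightarrow> f (\<gamma> \<sigma>) = Psi (f x0) (f x) \<sigma>"
    and below: "\<And>\<sigma>. \<sigma> \<in> {0..<m} \<Longrightarrow> (x, \<sigma>) \<in> DPhi"
  shows "(x, m) \<in> DPhi"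
proof -
  have xD: "x \<in> D" using \<gamma>(2,3) \<open>0 < m\<close> by force
  define p where "p = \<gamma> m"
  have pD: "p \<in> D" using \<gamma>(2) \<open>0 < m\<close> by (auto simp: p_def)
  have "0 \<in> {t. (p, t) \<in> DPhi}" using zero_in_flow_domain[OF pD] by simp
  then obtain e where e: "0 < e" "ball 0 e \<subseteq> {t. (p, t) \<in> DPhi}"
    by (rule openE[OF open_time_slice])
  define \<delta> where "\<delta> = min e m / 2"
  have \<delta>: "0 < \<delta>" "\<delta> < m" "\<delta> < e" using e \<open>0 < m\<close> by (auto simp: \<delta>_def)
  have p_dom: "(p, \<tau>) \<in> DPhi" if "\<bar>\<tau>\<bar> \<le> \<delta>" for \<tau>
  proof -
    have "\<tau> \<in> ball 0 e" using that \<delta> by (simp add: dist_real_def)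
    then show ?thesis using e(2) by auto
  qed
  have "Phi p (- \<delta>) = \<gamma> (m + - \<delta>)"
  proof (rule trajectory_eq_lift[of "{- \<delta>..0}" p "\<lambda>\<tau>. \<gamma> (m + \<tau>)" 0])
    show "continuous_on {- \<delta>..0} (\<lambda>\<tau>. \<gamma> (m + \<tau>))"
      by (rule continuous_on_compose2[OF \<gamma>(1)]) (use \<delta> in \<open>auto intro!: continuous_intros\<close>)
    show "f (\<gamma> (m + \<tau>)) = Psi (f x0) (f p) \<tau>" if "\<tau> \<in> {- \<delta>..0}" for \<tau>
      using lift[of "m + \<tau>"] lift[of m] that \<delta> by (simp add: p_def Psi_add)
  qed (use p_dom \<gamma>(2) \<delta> Phi_0[OF pD] p_def in auto)
  also have "\<gamma> (m + - \<delta>) = Phi x (m + - \<delta>)"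
    by (rule trajectory_eq_lift[of "{0..m - \<delta>}" x \<gamma> 0, symmetric])
      (use below \<delta> \<gamma> lift Phi_0[OF xD] in \<open>auto intro: continuous_on_subset\<close>)
  finally have step: "(Phi x (m + - \<delta>), 2 * \<delta>) \<in> DPhi"
    using Phi_add[of p "- \<delta>" "2 * \<delta>"] p_dom[of "- \<delta>"] p_dom[of \<delta>] \<delta> by auto
  have "m + - \<delta> \<in> {0..<m}" using \<delta> by simp
  from flow_domain_add[OF below[OF this] step] have "(x, m + - \<delta> + 2 * \<delta>) \<in> DPhi" .
  then have "(x, m + \<delta>) \<in> DPhi" by (simp add: algebra_simps)
  then show ?thesis
    using flow_domain_interval[OF zero_in_flow_domain[OF xD]] \<delta> \<open>0 < m\<close> by auto
qed

lemma flow_domain_contains_lift: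
  assumes "0 \<le> s" and \<gamma>: "continuous_on {0..s} \<gamma>" "\<gamma> ` {0..s} \<subseteq> D" "\<gamma> 0 = x"
    and lift: "\<And>\<sigma>. \<sigma> \<in> {0..s} \<Longrightarrow> f (\<gamma> \<sigma>) = Psi (f x0) (f x) \<sigma>"
  shows "(x, s) \<in> DPhi"
proof -
  have xD: "x \<in> D" using \<gamma>(2,3) \<open>0 \<le> s\<close> by force
  define J where "J = {\<sigma> \<in> {0..s}. (x, \<sigma>) \<in> DPhi}"
  define m where "m = Sup J"
  have J0: "0 \<in> J" using zero_in_flow_domain[OF xD] \<open>0 \<le> s\<close> by (simp add: J_def)
  have bdd: "bdd_above J" by (auto simp: J_def bdd_above_def)
  have m: "0 \<le> m" "m \<le> s"
    unfolding m_def using cSup_upper[OF J0 bdd] by (simp, intro cSup_least) (use J0 in \<open>auto simp: J_def\<close>)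
  have below: "(x, \<sigma>) \<in> DPhi" if "\<sigma> \<in> {0..<m}" for \<sigma>
  proof -
    have "\<sigma> < Sup J" using that by (simp add: m_def)
    then obtain \<tau> where "\<tau> \<in> J" "\<sigma> < \<tau>" using less_cSupE J0 by blast
    then show ?thesis
      using flow_domain_interval[OF zero_in_flow_domain[OF xD], of \<tau> \<sigma>] that by (auto simp: J_def)
  qed
  have m_dom: "(x, m) \<in> DPhi"
  proof (cases "m = 0")
    case True
    then show ?thesis using zero_in_flow_domain[OF xD] by simp
  next
    case False
    show ?thesis
      by (rule flow_domain_contains_lift_endpoint[OF _ continuous_on_subset[OF \<gamma>(1)] _ \<gamma>(3) lift below])
        (use False m \<gamma>(2) in auto)
  qed
  have "\<not> m < s"
  proof
    assume "m < s"
    have "m \<in> {t. (x, t) \<in> DPhi}" using m_dom by simp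
    then obtain e where e: "0 < e" "ball m e \<subseteq> {t. (x, t) \<in> DPhi}"
      by (rule openE[OF open_time_slice])
    define \<sigma> where "\<sigma> = m + min e (s - m) / 2"
    have "\<sigma> \<in> ball m e" using e(1) \<open>m < s\<close> by (simp add: \<sigma>_def dist_real_def)
    moreover have "0 \<le> \<sigma>" "\<sigma> \<le> s" using e(1) m \<open>m < s\<close> by (auto simp: \<sigma>_def min_def field_simps)
    ultimately have "\<sigma> \<in> J" using e(2) by (auto simp: J_def)
    then have "\<sigma> \<le> m" using cSup_upper[OF _ bdd] by (simp add: m_def)
    then show False using e(1) \<open>m < s\<close> by (simp add: \<sigma>_def)
  qed
  then show ?thesis using m m_dom by simp
qed

lemma Phi_in_basin:
  assumes x: "x \<in> basin" and xt: "(x, t) \<in> DPhi"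
  shows "Phi x t \<in> basin"
proof -
  have xD: "x \<in> D" and global: "\<And>s. 0 \<le> s \<Longrightarrow> (x, s) \<in> DPhi"
    and lim: "((\<lambda>s. Phi x s) \<longlongrightarrow> x0) at_top"
    using x by (auto simp: attraction_basin_def global_future_def)
  have shifted: "(Phi x t, s) \<in> DPhi \<and> Phi (Phi x t) s = Phi x (t + s)" if "0 \<le> s" for s
  proof -
    have "(x, t + s) \<in> DPhi"
      using global[of "t + s"] flow_domain_interval[OF xt zero_in_flow_domain[OF xD], of "t + s"] that
      by (cases "0 \<le> t + s") auto
    then show ?thesis using Phi_add[OF xt] by blast
  qed
  have "((\<lambda>s. Phi x (t + s)) \<longlongrightarrow> x0) at_top"
    using filterlim_compose[OF lim filterlim_tendsto_add_at_top[OF tendsto_const filterlim_ident]] by simp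
  moreover have "eventually (\<lambda>s. Phi x (t + s) = Phi (Phi x t) s) at_top"
    using eventually_ge_at_top[of 0] by eventually_elim (use shifted in auto)
  ultimately have "((\<lambda>s. Phi (Phi x t) s) \<longlongrightarrow> x0) at_top" by (rule Lim_transform_eventually)
  then show ?thesis using shifted Phi_in_D[OF xt]
    by (auto simp: attraction_basin_def global_future_def)
qed

lemma Phi_in_basin_iff:
  assumes xt: "(x, t) \<in> DPhi" shows "Phi x t \<in> basin \<longleftrightarrow> x \<in> basin"
proof
  assume "Phi x t \<in> basin"
  from Phi_in_basin[OF this Phi_reverse(1)[OF xt]] show "x \<in> basin"
    unfolding Phi_reverse(2)[OF xt] .
qed (rule Phi_in_basin[OF _ xt])

lemma Phi_in_closure_basin:
  assumes x: "x \<in> closure basin" and xt: "(x, t) \<in> DPhi"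
  shows "Phi x t \<in> closure basin"
proof -
  let ?S = "{z. (z, t) \<in> DPhi}"
  have "open ?S" using open_flow_preimage[OF open_UNIV, of t] by simp
  then have "x \<in> closure (?S \<inter> basin)" using open_Int_closure_subset x xt by blast
  then obtain a where a: "\<And>n. a n \<in> ?S \<inter> basin" "a \<longlonglongrightarrow> x"
    unfolding closure_sequential by blast
  have "(\<lambda>n. Phi (a n) t) \<longlonglongrightarrow> Phi x t"
    by (rule continuous_on_tendsto_compose[OF continuous_on_flow_map[of ?S t] a(2)])
      (use a xt in auto)
  moreover have "Phi (a n) t \<in> basin" for n using Phi_in_basin a(1)[of n] by simp
  ultimately show ?thesis unfolding closure_sequential by (auto intro!: exI[where x = "\<lambda>n. Phi (a n) t"])
qed

lemma chart_at_x0: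
  obtains U g r where "open U" "x0 \<in> U" "U \<subseteq> D" "open (f ` U)" "homeomorphism U (f ` U) f g"
    "0 < r" "ball (f x0) r \<subseteq> f ` U"
proof -
  obtain U g where U: "open U" "x0 \<in> U" "U \<subseteq> D" "open (f ` U)" "homeomorphism U (f ` U) f g"
    by (rule local_homeo_onE[OF local_homeo x0_in_D])
  moreover obtain r where "0 < r" "ball (f x0) r \<subseteq> f ` U"
    using U(2) by (rule openE[OF U(4) imageI])
  ultimately show ?thesis using that by blast
qed

context
  fixes U g r
  assumes chart: "open U" "x0 \<in> U" "U \<subseteq> D" "open (f ` U)" "homeomorphism U (f ` U) f g"
    "0 < r" "ball (f x0) r \<subseteq> f ` U"
begin

lemma chart_lift:
  assumes y: "y \<in> ball (f x0) r"
  shows "continuous_on {0..} (\<lambda>s. g (Psi (f x0) y s))"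
    and "(\<lambda>s. g (Psi (f x0) y s)) ` {0..} \<subseteq> U"
    and "\<And>s. 0 \<le> s \<Longrightarrow> f (g (Psi (f x0) y s)) = Psi (f x0) y s"
proof -
  have ball: "Psi (f x0) y s \<in> f ` U" if "0 \<le> s" for s
  proof -
    have "dist (Psi (f x0) y s) (f x0) < r"
      using dist_Psi_le[OF that, of "f x0" y] y by (simp add: dist_commute)
    then show ?thesis using chart(7) by (auto simp: dist_commute)
  qed
  show "continuous_on {0..} (\<lambda>s. g (Psi (f x0) y s))"
    by (rule continuous_on_compose2[OF homeomorphism_cont2[OF chart(5)] continuous_on_Psi]) (use ball in auto)
  show "(\<lambda>s. g (Psi (f x0) y s)) ` {0..} \<subseteq> U"
    using ball homeomorphism_image2[OF chart(5)] by auto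
  show "\<And>s. 0 \<le> s \<Longrightarrow> f (g (Psi (f x0) y s)) = Psi (f x0) y s"
    using ball homeomorphism_apply2[OF chart(5)] by simp
qed

lemma chart_nbhd_subset_basin: "U \<inter> f -` ball (f x0) r \<subseteq> basin"
proof
  fix q assume q: "q \<in> U \<inter> f -` ball (f x0) r"
  let ?\<gamma> = "\<lambda>s. g (Psi (f x0) (f q) s)"
  have qD: "q \<in> D" using q chart(3) by auto
  have \<gamma>0: "?\<gamma> 0 = q" using q homeomorphism_apply1[OF chart(5)] by simp
  have "f q \<in> ball (f x0) r" using q by simp
  note \<gamma> = chart_lift[OF this]
  have traj: "(q, s) \<in> DPhi \<and> Phi q s = ?\<gamma> s" if "0 \<le> s" for s
  proof -
    have cont: "continuous_on {0..s} ?\<gamma>" by (rule continuous_on_subset[OF \<gamma>(1)]) auto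
    have img: "?\<gamma> ` {0..s} \<subseteq> D" using \<gamma>(2) chart(3) by fastforce
    have lift: "f (?\<gamma> \<sigma>) = Psi (f x0) (f q) \<sigma>" if "\<sigma> \<in> {0..s}" for \<sigma> using \<gamma>(3) that by simp
    have dom: "(q, s) \<in> DPhi" by (rule flow_domain_contains_lift[OF that cont img \<gamma>0 lift])
    then have "\<And>\<sigma>. \<sigma> \<in> {0..s} \<Longrightarrow> (q, \<sigma>) \<in> DPhi"
      using flow_domain_interval[OF zero_in_flow_domain[OF qD]] by auto
    then have "Phi q s = ?\<gamma> s"
      by (rule trajectory_eq_lift[OF connected_Icc _ cont img lift, of 0]) (use that \<gamma>0 Phi_0[OF qD] in auto)
    with dom show ?thesis by simp
  qed
  have "isCont g (f x0)"
    using homeomorphism_cont2[OF chart(5)] chart(2,4) by (simp add: continuous_on_eq_continuous_at)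
  then have "(?\<gamma> \<longlongrightarrow> g (f x0)) at_top" by (rule isCont_tendsto_compose[OF _ tendsto_Psi])
  then have "(?\<gamma> \<longlongrightarrow> x0) at_top" using homeomorphism_apply1[OF chart(5) chart(2)] by simp
  moreover have "eventually (\<lambda>s. ?\<gamma> s = Phi q s) at_top"
    using eventually_ge_at_top[of 0] by eventually_elim (use traj in auto)
  ultimately have "((\<lambda>s. Phi q s) \<longlongrightarrow> x0) at_top" by (rule Lim_transform_eventually)
  then show "q \<in> basin" using traj qD by (auto simp: attraction_basin_def global_future_def)
qed

lemma basin_chart_fixed:
  assumes a: "a \<in> basin" and fa: "f a \<in> ball (f x0) r"
  shows "g (f a) = a"
proof -
  have aD: "a \<in> D" and global: "\<And>s. 0 \<le> s \<Longrightarrow> (a, s) \<in> DPhi"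
    and lim: "((\<lambda>t. Phi a t) \<longlongrightarrow> x0) at_top"
    using a by (auto simp: attraction_basin_def global_future_def)
  have "eventually (\<lambda>t. 0 \<le> t \<and> Phi a t \<in> U) at_top"
    using topological_tendstoD[OF lim chart(1,2)] eventually_ge_at_top[of 0] by eventually_elim auto
  then obtain S where S: "0 \<le> S" "Phi a S \<in> U" by (auto simp: eventually_at_top_linorder)
  let ?\<gamma> = "\<lambda>s. g (Psi (f x0) (f a) s)"
  note \<gamma> = chart_lift[OF fa]
  have cont: "continuous_on {0..S} ?\<gamma>" by (rule continuous_on_subset[OF \<gamma>(1)]) auto
  have img: "?\<gamma> ` {0..S} \<subseteq> D" using \<gamma>(2) chart(3) by fastforce
  have "Phi a S = g (f (Phi a S))" using homeomorphism_apply1[OF chart(5) S(2)] by simp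
  also have "\<dots> = ?\<gamma> S" using f_Phi global S(1) by simp
  finally have agree: "Phi a S = ?\<gamma> S" .
  have "Phi a 0 = ?\<gamma> 0"
    by (rule trajectory_eq_lift[of "{0..S}" a ?\<gamma> S 0 , OF connected_Icc _ cont img])
      (use global S \<gamma>(3) agree in auto)
  then show ?thesis using Phi_0[OF aD] by simp
qed

lemma closure_basin_chart_fixed:
  assumes p: "p \<in> D \<inter> closure basin" and fp: "f p \<in> ball (f x0) r"
  shows "g (f p) = p"
proof -
  define N where "N = D \<inter> f -` ball (f x0) r"
  have "open N" unfolding N_def
    using continuous_open_preimage[OF local_homeo_on_continuous[OF local_homeo] local_homeo_on_open[OF local_homeo]]
    by simp
  have "p \<in> N" using p fp by (simp add: N_def)
  then have "p \<in> closure (N \<inter> basin)" using open_Int_closure_subset[OF \<open>open N\<close>, of basin] p by blast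
  then obtain a where a: "\<And>n. a n \<in> N \<inter> basin" "a \<longlonglongrightarrow> p"
    unfolding closure_sequential by blast
  have "continuous_on N (\<lambda>z. g (f z))"
    by (rule continuous_on_compose2[OF homeomorphism_cont2[OF chart(5)]
          continuous_on_subset[OF local_homeo_on_continuous[OF local_homeo]]])
      (use chart(7) in \<open>auto simp: N_def\<close>)
  then have "(\<lambda>n. g (f (a n))) \<longlonglongrightarrow> g (f p)"
    by (rule continuous_on_tendsto_compose[OF _ a(2)]) (use p fp a(1) in \<open>auto simp: N_def\<close>)
  moreover have "g (f (a n)) = a n" for n using basin_chart_fixed a(1)[of n] by (simp add: N_def)
  ultimately show ?thesis using a(2) LIMSEQ_unique by auto
qed

end

lemma open_basin: "open basin"
proof -
  obtain U g r where chart: "open U" "x0 \<in> U" "U \<subseteq> D" "open (f ` U)" "homeomorphism U (f ` U) f g"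
    "0 < r" "ball (f x0) r \<subseteq> f ` U"
    by (rule chart_at_x0)
  let ?W = "U \<inter> f -` ball (f x0) r"
  have "open ?W" using continuous_open_preimage[OF homeomorphism_cont1[OF chart(5)] chart(1)] by simp
  have "x0 \<in> ?W" using chart(2,6) by simp
  have "\<exists>T. open T \<and> z \<in> T \<and> T \<subseteq> basin" if z: "z \<in> basin" for z
  proof -
    have "((\<lambda>t. Phi z t) \<longlongrightarrow> x0) at_top" using z by (simp add: attraction_basin_def)
    from topological_tendstoD[OF this \<open>open ?W\<close> \<open>x0 \<in> ?W\<close>]
    have "eventually (\<lambda>t. 0 \<le> t \<and> Phi z t \<in> ?W) at_top"
      using eventually_ge_at_top[of 0] by eventually_elim auto
    then obtain T where T: "0 \<le> T" "Phi z T \<in> ?W" by (auto simp: eventually_at_top_linorder)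
    let ?N = "{z'. (z', T) \<in> DPhi \<and> Phi z' T \<in> ?W}"
    have "z \<in> ?N" using z T by (auto simp: attraction_basin_def global_future_def)
    moreover have "?N \<subseteq> basin"
      using chart_nbhd_subset_basin[OF chart] Phi_in_basin_iff by blast
    ultimately show ?thesis using open_flow_preimage[OF \<open>open ?W\<close>] by blast
  qed
  then show ?thesis by (subst open_subopen) blast
qed

lemma frontier_basin: "frontier basin = closure basin - basin"
  using open_basin by (simp add: frontier_def interior_open)

lemma Phi_in_frontier_basin:
  assumes "x \<in> D \<inter> frontier basin" "(x, t) \<in> DPhi"
  shows "Phi x t \<in> D \<inter> frontier basin"
  using assms Phi_in_D Phi_in_closure_basin Phi_in_basin_iff by (auto simp: frontier_basin)

lemma frontier_basin_not_global_future:
  assumes x: "x \<in> D \<inter> frontier basin"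
  shows "\<not> global_future DPhi x"
proof
  assume global: "global_future DPhi x"
  obtain U g r where chart: "open U" "x0 \<in> U" "U \<subseteq> D" "open (f ` U)" "homeomorphism U (f ` U) f g"
    "0 < r" "ball (f x0) r \<subseteq> f ` U"
    by (rule chart_at_x0)
  have "eventually (\<lambda>t. Psi (f x0) (f x) t \<in> ball (f x0) r) at_top"
    by (rule topological_tendstoD[OF tendsto_Psi open_ball]) (use chart(6) in simp)
  then have "eventually (\<lambda>t. 0 \<le> t \<and> Psi (f x0) (f x) t \<in> ball (f x0) r) at_top"
    using eventually_ge_at_top[of 0] by eventually_elim auto
  then obtain T where T: "0 \<le> T" "Psi (f x0) (f x) T \<in> ball (f x0) r"
    by (auto simp: eventually_at_top_linorder)
  define p where "p = Phi x T"
  have xT: "(x, T) \<in> DPhi" using global T(1) by (simp add: global_future_def)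
  have p: "p \<in> D \<inter> frontier basin" using Phi_in_frontier_basin[OF x xT] by (simp add: p_def)
  have fp: "f p \<in> ball (f x0) r" using f_Phi[OF xT] T(2) by (simp add: p_def)
  have "g (f p) = p"
    using closure_basin_chart_fixed[OF chart _ fp] p by (auto simp: frontier_basin)
  then have "p \<in> U" using homeomorphism_image2[OF chart(5)] chart(7) fp by force
  then have "p \<in> basin" using chart_nbhd_subset_basin[OF chart] fp by blast
  then show False using p by (simp add: frontier_basin)
qed

end

theorem lemma2p2:
  fixes D :: "'a::banach set" and f :: "'a \<Rightarrow> 'b::banach" and x0 :: 'a
    and DPhi :: "('a \<times> real) set" and Phi :: "'a \<Rightarrow> real \<Rightarrow> 'a"
  assumes "open D" "connected D" "D \<noteq> {}"
    and "local_homeo_on D f"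
    and "x0 \<in> D"
    and "auxiliary_flow D f x0 DPhi Phi"
  shows "(\<forall>x t. x \<in> attraction_basin D DPhi Phi x0 \<and> (x, t) \<in> DPhi
            \<longrightarrow> Phi x t \<in> attraction_basin D DPhi Phi x0)
       \<and> (\<forall>x t. x \<in> D \<inter> frontier (attraction_basin D DPhi Phi x0) \<and> (x, t) \<in> DPhi
            \<longrightarrow> Phi x t \<in> D \<inter> frontier (attraction_basin D DPhi Phi x0))
       \<and> (\<forall>x \<in> D \<inter> frontier (attraction_basin D DPhi Phi x0). \<not> global_future DPhi x)"
proof -
  \<comment> \<open>Openness of \<open>D\<close> follows from \<open>local_homeo_on\<close>.\<close>
  interpret lifted_flow D DPhi Phi f x0
    using assms(4-6) by unfold_locales (auto simp: auxiliary_flow_def)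
  show ?thesis
    using Phi_in_basin Phi_in_frontier_basin frontier_basin_not_global_future by blast
qed

end
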